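(* Let $\mathcal D$ be a dyadic grid in $\mathbf R^d$, let $\mathcal S\subseteq\mathcal D$ be a sparse collection, and let $\alpha_1,\ldots,\alpha_m\in[0,1)$ with $\sum_{j=1}^m\alpha_j<1$. Then \[ \sum_{\substack{Q'\in\mathcal S\\ Q'\subseteq Q}}\Big(\prod_{j=1}^m\langle g_j\rangle_{1,Q'}^{\alpha_j}\Big)|Q'|\lesssim\Big(\prod_{j=1}^m\langle g_j\rangle_{1,Q}^{\alpha_j}\Big)|Q| \] for all $g_1,\ldots,g_m\in L^1_{\mathrm{loc}}(\mathbf R^d)$ and all $Q\in\mathcal D$, with implicit constant depending only on $d$, $m$ and $\alpha_1,\dots,\alpha_m$.
   Context: A dyadic grid is $\mathcal D^\alpha=\{2^{-j}([0,1)^d+\alpha+k):j\in\mathbf Z,k\in\mathbf Z^d\}$ for some $\alpha\in\{0,\frac13,\frac23\}^d$. A collection $\mathcal S$ of cubes is sparse if each $Q\in\mathcal S$ has $E_Q\subseteq Q$ with $|E_Q|\ge\frac12|Q|$ and $\{E_Q\}_{Q\in\mathcal S}$ pairwise disjoint. $\langle g\rangle_{1,Q}:=\frac1{|Q|}\int_Q|g|$. *)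

theory Defs
  imports "HOL-Analysis.Analysis"
begin

definition dyadic_cube :: "(real^'n) \<Rightarrow> int \<Rightarrow> (int^'n) \<Rightarrow> (real^'n) set" where
  "dyadic_cube t j k = {x. \<forall>i. 2 powr (- real_of_int j) * (t$i + real_of_int (k$i)) \<le> x$i
                            \<and> x$i < 2 powr (- real_of_int j) * (t$i + real_of_int (k$i) + 1)}"

definition dyadic_grid :: "(real^'n) \<Rightarrow> (real^'n) set set" where
  "dyadic_grid t = {dyadic_cube t j k | j k. True}"

definition grid_shift :: "(real^'n) \<Rightarrow> bool" where
  "grid_shift t \<longleftrightarrow> (\<forall>i. t$i \<in> {0, 1/3, 2/3})"

definition sparse :: "(real^'n) set set \<Rightarrow> bool" where
  "sparse S \<longleftrightarrow> (\<exists>E. (\<forall>Q\<in>S. E Q \<subseteq> Q \<and> E Q \<in> sets lebesgue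
                          \<and> measure lebesgue (E Q) \<ge> 1/2 * measure lebesgue Q)
                   \<and> (\<forall>Q\<in>S. \<forall>Q'\<in>S. Q \<noteq> Q' \<longrightarrow> E Q \<inter> E Q' = {}))"

definition avg1 :: "((real^'n) \<Rightarrow> real) \<Rightarrow> (real^'n) set \<Rightarrow> real" where
  "avg1 g Q = (\<integral>x\<in>Q. \<bar>g x\<bar> \<partial>lebesgue) / measure lebesgue Q"

definition locally_integrable :: "((real^'n) \<Rightarrow> real) \<Rightarrow> bool" where
  "locally_integrable g \<longleftrightarrow> (\<forall>K. compact K \<longrightarrow> set_integrable lebesgue K g)"

text \<open>Power with the convention x^0 = 1 (also for x = 0).\<close>
definition pw :: "real \<Rightarrow> real \<Rightarrow> real" where
  "pw x a = (if a = 0 then 1 else x powr a)"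

end

theory Submission
  imports Defs
begin

text \<open>
  Let s = a_1 + ... + a_m < 1 and x_j(Q') = <g_j>_Q' / <g_j>_Q. Bounding every factor by the
  largest one gives  prod_j <g_j>_Q'^a_j <= (prod_j <g_j>_Q^a_j) (1 + sum_j x_j(Q')^s),  so it
  suffices to bound  sum |Q'|  and, for each j,  sum x_j(Q')^s |Q'|  by multiples of |Q|.
  Sparseness gives  sum |Q'| <= 2 |union Q'|  for every finite subfamily; combined with a Vitali
  covering argument this yields a weak type estimate: the cubes with x_j(Q') > theta have total
  measure at most 2 3^d |Q| / theta. Sorting the cubes into the dyadic layers
  2^(i-1) < x_j(Q') <= 2^i, layer i contributes at most 4 3^d |Q| (2^(s-1))^i, a convergent
  geometric series since s < 1. All bounds are uniform over finite subfamilies, which gives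
  summability and the bound for the infinite sum.
\<close>

definition cube :: "real^'n \<Rightarrow> real \<Rightarrow> (real^'n) set" where
  "cube c h = {x. \<forall>i. c$i \<le> x$i \<and> x$i < c$i + h}"

definition is_cube :: "(real^'n) set \<Rightarrow> bool" where
  "is_cube Q \<longleftrightarrow> (\<exists>c h. 0 < h \<and> Q = cube c h)"

lemma cube_in_sets_borel: "cube c h \<in> sets borel"
  unfolding cube_def by measurable

lemma cube_in_sets_lebesgue: "cube c h \<in> sets lebesgue"
  using cube_in_sets_borel[of c h] by simp

lemma box_subset_cube: "box c (\<chi> i. c$i + h) \<subseteq> cube c h"
  and cube_subset_cbox: "cube c h \<subseteq> cbox c (\<chi> i. c$i + h)"
  unfolding cube_def by (auto simp: mem_box_cart less_imp_le)

lemma fmeasurable_cube: "cube c h \<in> lmeasurable"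
  using lmeasurable_cbox cube_subset_cbox cube_in_sets_lebesgue by (rule fmeasurableI2)

lemma measure_cube:
  fixes c :: "real^'n"
  assumes "0 \<le> h"
  shows "measure lebesgue (cube c h) = h ^ CARD('n)"
proof -
  let ?b = "\<chi> i. c$i + h"
  have "c \<in> cbox c ?b"
    using assms by (simp add: mem_box_cart)
  then have "measure lborel (cbox c ?b) = h ^ CARD('n)"
    by (subst content_cbox_cart) auto
  moreover have "measure lborel (box c ?b) = measure lborel (cbox c ?b)"
    unfolding measure_lborel_box_eq measure_lborel_cbox_eq ..
  moreover have "measure lebesgue (box c ?b) \<le> measure lebesgue (cube c h)"
    by (rule measure_mono_fmeasurable[OF box_subset_cube _ fmeasurable_cube]) simp
  moreover have "measure lebesgue (cube c h) \<le> measure lebesgue (cbox c ?b)"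
    using cube_subset_cbox cube_in_sets_lebesgue by (rule measure_mono_fmeasurable) simp
  ultimately show ?thesis
    by simp
qed

lemma center_in_cube: "0 < h \<Longrightarrow> c \<in> cube c h"
  by (simp add: cube_def)

lemma is_cube_fmeasurable: "is_cube Q \<Longrightarrow> Q \<in> lmeasurable"
  by (auto simp: is_cube_def fmeasurable_cube)

lemma is_cube_measure_pos: "is_cube Q \<Longrightarrow> 0 < measure lebesgue Q"
  by (auto simp: is_cube_def measure_cube)

lemma fmeasurable_Union_cubes: "finite T \<Longrightarrow> (\<And>Q. Q \<in> T \<Longrightarrow> is_cube Q) \<Longrightarrow> \<Union>T \<in> lmeasurable"
  using is_cube_fmeasurable by (intro fmeasurable.finite_Union) auto

lemma dyadic_cube_is_cube: "Q \<in> dyadic_grid t \<Longrightarrow> is_cube Q"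
proof -
  assume "Q \<in> dyadic_grid t"
  then obtain j k where Q: "Q = dyadic_cube t j k"
    by (auto simp: dyadic_grid_def)
  define h :: real where "h = 2 powr (- real_of_int j)"
  define c where "c = (\<chi> i. h * (t$i + real_of_int (k$i)))"
  have "Q = cube c h"
    unfolding Q dyadic_cube_def cube_def c_def h_def by (simp add: algebra_simps)
  moreover have "0 < h"
    by (simp add: h_def)
  ultimately show "is_cube Q"
    unfolding is_cube_def by blast
qed

lemma set_integrable_cube_if_locally_integrable:
  assumes "locally_integrable g" "is_cube Q"
  shows "set_integrable lebesgue Q g"
proof -
  obtain c h where Q: "Q = cube c h"
    using assms(2) unfolding is_cube_def by blast
  have "set_integrable lebesgue (cbox c (\<chi> i. c$i + h)) g"
    using assms(1) compact_cbox unfolding locally_integrable_def by blast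
  then show ?thesis
    unfolding Q using cube_in_sets_lebesgue cube_subset_cbox by (rule set_integrable_subset)
qed

lemma cube_subset_tripled_cube:
  fixes c :: "real^'n"
  assumes "cube c h \<inter> Q \<noteq> {}" "is_cube Q" "measure lebesgue Q \<le> measure lebesgue (cube c h)" "0 < h"
  shows "Q \<subseteq> cube (\<chi> i. c$i - h) (3 * h)"
proof
  obtain c' h' where h': "0 < h'" and Q: "Q = cube c' h'"
    using assms(2) unfolding is_cube_def by blast
  have "h' ^ CARD('n) \<le> h ^ CARD('n)"
    using assms(3,4) h' by (simp add: Q measure_cube)
  then have "h' \<le> h"
    using assms(4) h' power_mono_iff[of h' h "CARD('n)"] by simp
  fix x assume "x \<in> Q"
  moreover obtain y where "y \<in> cube c h" "y \<in> Q"
    using assms(1) by blast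
  ultimately have "c$i - h \<le> x$i \<and> x$i < c$i - h + 3 * h" for i
    using \<open>h' \<le> h\<close> unfolding Q cube_def by (smt (verit) mem_Collect_eq)
  then show "x \<in> cube (\<chi> i. c$i - h) (3 * h)"
    unfolding cube_def by simp
qed

lemma measure_Union_cubes_le_tripled_max:
  fixes T :: "(real^'n) set set"
  assumes "finite T" "\<And>Q. Q \<in> T \<Longrightarrow> is_cube Q" "P \<in> T"
    "\<And>Q. Q \<in> T \<Longrightarrow> measure lebesgue Q \<le> measure lebesgue P"
  shows "measure lebesgue (\<Union>T)
           \<le> 3 ^ CARD('n) * measure lebesgue P + measure lebesgue (\<Union>{Q\<in>T. P \<inter> Q = {}})"
proof -
  obtain c h where h: "0 < h" and P: "P = cube c h"
    using assms(2,3) unfolding is_cube_def by blast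
  have "Q \<subseteq> cube (\<chi> i. c$i - h) (3 * h)" if "Q \<in> T" "P \<inter> Q \<noteq> {}" for Q
    using that assms(2,4) h unfolding P by (intro cube_subset_tripled_cube) auto
  then have "\<Union>T \<subseteq> cube (\<chi> i. c$i - h) (3 * h) \<union> \<Union>{Q\<in>T. P \<inter> Q = {}}"
    by blast
  moreover have "\<Union>T \<in> sets lebesgue"
    using fmeasurable_Union_cubes[OF assms(1,2)] by auto
  moreover have "\<Union>{Q\<in>T. P \<inter> Q = {}} \<in> lmeasurable"
    using assms(1,2) by (intro fmeasurable_Union_cubes) auto
  ultimately have "measure lebesgue (\<Union>T)
      \<le> measure lebesgue (cube (\<chi> i. c$i - h) (3 * h)) + measure lebesgue (\<Union>{Q\<in>T. P \<inter> Q = {}})"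
    using fmeasurable_cube[of "\<chi> i. c$i - h" "3 * h"]
    by (intro order_trans[OF measure_mono_fmeasurable measure_Un_le] fmeasurable.Un) auto
  then show ?thesis
    using h by (simp add: measure_cube P power_mult_distrib)
qed

text \<open>Greedy selection: keep a cube of maximal measure, discard the cubes meeting it, and recurse.\<close>

lemma vitali_covering_cubes_finite:
  fixes T :: "(real^'n) set set"
  assumes "finite T" "\<And>Q. Q \<in> T \<Longrightarrow> is_cube Q"
  shows "\<exists>M\<subseteq>T. disjoint M \<and>
           measure lebesgue (\<Union>T) \<le> 3 ^ CARD('n) * (\<Sum>P\<in>M. measure lebesgue P)"
  using assms
proof (induction T rule: finite_psubset_induct)
  case (psubset T)
  show ?case
  proof (cases "T = {}")
    case True
    then show ?thesis by auto
  next
    case False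
    obtain P where P: "P \<in> T" and P_Max: "Max (measure lebesgue ` T) = measure lebesgue P"
      using obtains_MAX[OF psubset.hyps False] by metis
    define T' where "T' = {Q\<in>T. P \<inter> Q = {}}"
    have "P \<notin> T'"
      using psubset.prems[OF P] center_in_cube unfolding T'_def is_cube_def by blast
    with P have "T' \<subset> T"
      unfolding T'_def by blast
    then have "\<exists>M\<subseteq>T'. disjoint M \<and>
        measure lebesgue (\<Union>T') \<le> 3 ^ CARD('n) * (\<Sum>P\<in>M. measure lebesgue P)"
      by (rule psubset.IH) (simp add: T'_def psubset.prems)
    then obtain M' where M': "M' \<subseteq> T'" "disjoint M'"
      "measure lebesgue (\<Union>T') \<le> 3 ^ CARD('n) * (\<Sum>P\<in>M'. measure lebesgue P)"
      by blast
    have "measure lebesgue (\<Union>T) \<le> 3 ^ CARD('n) * measure lebesgue P + measure lebesgue (\<Union>T')"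
      unfolding T'_def using psubset.hyps P
      by (intro measure_Union_cubes_le_tripled_max psubset.prems) (simp_all flip: P_Max)
    also have "\<dots> \<le> 3 ^ CARD('n) * (\<Sum>P\<in>insert P M'. measure lebesgue P)"
      using M'(1,3) \<open>T' \<subset> T\<close> \<open>P \<notin> T'\<close> psubset.hyps
      by (subst sum.insert) (auto simp: distrib_left dest: finite_subset)
    finally have "measure lebesgue (\<Union>T) \<le> 3 ^ CARD('n) * (\<Sum>P\<in>insert P M'. measure lebesgue P)" .
    moreover have "disjoint (insert P M')"
      using M'(1,2) unfolding T'_def by (auto simp: pairwise_insert disjnt_def)
    moreover have "insert P M' \<subseteq> T"
      using M'(1) P unfolding T'_def by blast
    ultimately show ?thesis
      by blast
  qed
qed

lemma sparse_sum_measure_le: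
  assumes "sparse S" "finite T" "T \<subseteq> S" "\<Union>T \<subseteq> B" "B \<in> lmeasurable"
  shows "(\<Sum>Q\<in>T. measure lebesgue Q) \<le> 2 * measure lebesgue B"
proof -
  obtain E where E: "\<forall>Q\<in>S. E Q \<subseteq> Q \<and> E Q \<in> sets lebesgue
                         \<and> measure lebesgue (E Q) \<ge> 1/2 * measure lebesgue Q"
    and E_disj: "\<forall>Q\<in>S. \<forall>Q'\<in>S. Q \<noteq> Q' \<longrightarrow> E Q \<inter> E Q' = {}"
    using assms(1) unfolding sparse_def by (elim exE conjE)
  have E_sub: "E Q \<subseteq> B" and E_fin: "E Q \<in> lmeasurable" if "Q \<in> T" for Q
  proof -
    show "E Q \<subseteq> B"
      using E assms(3,4) that by blast
    then show "E Q \<in> lmeasurable"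
      using E assms(3) that by (intro fmeasurableI2[OF assms(5)]) auto
  qed
  have "(\<Sum>Q\<in>T. measure lebesgue Q) \<le> (\<Sum>Q\<in>T. 2 * measure lebesgue (E Q))"
  proof (rule sum_mono)
    fix Q assume "Q \<in> T"
    then have "1/2 * measure lebesgue Q \<le> measure lebesgue (E Q)"
      using E assms(3) by blast
    then show "measure lebesgue Q \<le> 2 * measure lebesgue (E Q)"
      by simp
  qed
  also have "\<dots> = 2 * measure lebesgue (\<Union>Q\<in>T. E Q)"
  proof -
    have disj: "disjoint_family_on E T"
      using E_disj assms(3) unfolding disjoint_family_on_def by blast
    have "measure lebesgue (\<Union>Q\<in>T. E Q) = (\<Sum>Q\<in>T. measure lebesgue (E Q))"
      by (rule measure_finite_Union[OF assms(2) _ disj])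
        (use fmeasurableD[OF E_fin] fmeasurableD2[OF E_fin] in \<open>auto simp: top_unique\<close>)
    then show ?thesis
      by (simp add: sum_distrib_left)
  qed
  also have "\<dots> \<le> 2 * measure lebesgue B"
  proof -
    have "(\<Union>Q\<in>T. E Q) \<in> sets lebesgue"
      using assms(2) fmeasurableD[OF E_fin] by blast
    with E_sub show ?thesis
      by (simp add: measure_mono_fmeasurable[OF _ _ assms(5)] UN_least)
  qed
  finally show ?thesis .
qed

lemma set_integral_abs_nonneg:
  fixes g :: "'a \<Rightarrow> real"
  shows "0 \<le> (\<integral>x\<in>A. \<bar>g x\<bar> \<partial>M)"
  unfolding set_lebesgue_integral_def
  by (intro Bochner_Integration.integral_nonneg) (simp split: split_indicator)

lemma set_integral_mono_set_nonneg:
  fixes f :: "'a \<Rightarrow> real"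
  assumes "set_integrable M B f" "A \<in> sets M" "A \<subseteq> B" "\<And>x. x \<in> B \<Longrightarrow> 0 \<le> f x"
  shows "(LINT x:A|M. f x) \<le> (LINT x:B|M. f x)"
proof -
  have "set_integrable M A f"
    using assms(1-3) by (rule set_integrable_subset)
  then show ?thesis
    using assms unfolding set_integrable_def set_lebesgue_integral_def
    by (intro integral_mono) (auto split: split_indicator)
qed

lemma sum_set_integral_disjoint_le:
  fixes f :: "'a \<Rightarrow> real"
  assumes "finite \<P>" "disjoint \<P>" "\<And>P. P \<in> \<P> \<Longrightarrow> P \<in> sets M \<and> P \<subseteq> B"
    "set_integrable M B f" "\<And>x. x \<in> B \<Longrightarrow> 0 \<le> f x"
  shows "(\<Sum>P\<in>\<P>. LINT x:P|M. f x) \<le> (LINT x:B|M. f x)"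
proof -
  have "set_integrable M P f" if "P \<in> \<P>" for P
    using assms(3)[OF that] by (intro set_integrable_subset[OF assms(4)]) auto
  then have "(LINT x:(\<Union>P\<in>\<P>. P)|M. f x) = (\<Sum>P\<in>\<P>. LINT x:P|M. f x)"
    using assms(1-3)
    by (intro set_integral_finite_Union) (auto simp: disjoint_family_on_def disjoint_def)
  then have "(\<Sum>P\<in>\<P>. LINT x:P|M. f x) = (LINT x:\<Union>\<P>|M. f x)"
    by simp
  also have "\<dots> \<le> (LINT x:B|M. f x)"
    using assms by (intro set_integral_mono_set_nonneg) auto
  finally show ?thesis .
qed

lemma avg1_nonneg: "0 \<le> avg1 g Q"
  by (simp add: avg1_def set_integral_abs_nonneg)

lemma set_integral_abs_eq_avg1_mult:
  "measure lebesgue Q \<noteq> 0 \<Longrightarrow> (\<integral>x\<in>Q. \<bar>g x\<bar> \<partial>lebesgue) = avg1 g Q * measure lebesgue Q"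
  by (simp add: avg1_def)

text \<open>When \<open>avg1 g Q = 0\<close> the ratio is \<open>0\<close> by the convention \<open>x / 0 = 0\<close>; the identity
  survives because then \<open>g\<close> vanishes almost everywhere on \<open>Q\<close>, hence \<open>avg1 g Q' = 0\<close>.\<close>

lemma avg1_eq_mult_ratio_if_subset:
  assumes "set_integrable lebesgue Q g" "Q' \<in> sets lebesgue" "Q' \<subseteq> Q" "0 < measure lebesgue Q"
  shows "avg1 g Q' = avg1 g Q * (avg1 g Q' / avg1 g Q)"
proof (cases "avg1 g Q = 0")
  case True
  then have "(\<integral>x\<in>Q. \<bar>g x\<bar> \<partial>lebesgue) = 0"
    using assms(4) by (simp add: set_integral_abs_eq_avg1_mult)
  moreover have "(\<integral>x\<in>Q'. \<bar>g x\<bar> \<partial>lebesgue) \<le> (\<integral>x\<in>Q. \<bar>g x\<bar> \<partial>lebesgue)"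
    using assms(1-3) by (intro set_integral_mono_set_nonneg set_integrable_abs) auto
  moreover have "0 \<le> (\<integral>x\<in>Q'. \<bar>g x\<bar> \<partial>lebesgue)"
    by (rule set_integral_abs_nonneg)
  ultimately show ?thesis
    using True by (simp add: avg1_def)
qed simp

lemma sparse_sum_measure_avg1_gt_le:
  fixes g :: "real^'n \<Rightarrow> real"
  assumes "sparse S" "finite T" "T \<subseteq> S" "\<And>Q'. Q' \<in> T \<Longrightarrow> is_cube Q' \<and> Q' \<subseteq> Q"
    "set_integrable lebesgue Q g" "0 < \<mu>"
  shows "(\<Sum>Q'\<in>{Q'\<in>T. \<mu> < avg1 g Q'}. measure lebesgue Q')
           \<le> 2 * 3 ^ CARD('n) / \<mu> * (\<integral>x\<in>Q. \<bar>g x\<bar> \<partial>lebesgue)"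
proof -
  define T' where "T' = {Q'\<in>T. \<mu> < avg1 g Q'}"
  have T': "finite T'" "T' \<subseteq> S" "\<And>Q'. Q' \<in> T' \<Longrightarrow> is_cube Q'"
    using assms(2-4) unfolding T'_def by auto
  obtain M where M: "M \<subseteq> T'" "disjoint M"
    "measure lebesgue (\<Union>T') \<le> 3 ^ CARD('n) * (\<Sum>P\<in>M. measure lebesgue P)"
    using vitali_covering_cubes_finite[OF T'(1,3)] by blast
  have "(\<Sum>Q'\<in>T'. measure lebesgue Q') \<le> 2 * measure lebesgue (\<Union>T')"
    using assms(1) T' fmeasurable_Union_cubes by (intro sparse_sum_measure_le) auto
  also have "\<dots> \<le> 2 * 3 ^ CARD('n) * (\<Sum>P\<in>M. measure lebesgue P)"
    using M(3) by simp
  also have "\<dots> \<le> 2 * 3 ^ CARD('n) * (\<Sum>P\<in>M. (\<integral>x\<in>P. \<bar>g x\<bar> \<partial>lebesgue) / \<mu>)"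
  proof (intro mult_left_mono sum_mono)
    fix P assume "P \<in> M"
    then have "\<mu> < avg1 g P" "0 < measure lebesgue P"
      using M(1) T'(3) is_cube_measure_pos unfolding T'_def by auto
    then show "measure lebesgue P \<le> (\<integral>x\<in>P. \<bar>g x\<bar> \<partial>lebesgue) / \<mu>"
      using assms(6) by (simp add: set_integral_abs_eq_avg1_mult field_simps)
  qed simp
  also have "\<dots> \<le> 2 * 3 ^ CARD('n) / \<mu> * (\<integral>x\<in>Q. \<bar>g x\<bar> \<partial>lebesgue)"
  proof -
    have "P \<in> sets lebesgue \<and> P \<subseteq> Q" if "P \<in> M" for P
      using that M(1) assms(4) is_cube_fmeasurable unfolding T'_def by blast
    then have "(\<Sum>P\<in>M. \<integral>x\<in>P. \<bar>g x\<bar> \<partial>lebesgue) \<le> (\<integral>x\<in>Q. \<bar>g x\<bar> \<partial>lebesgue)"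
      using M(1,2) T'(1) assms(5)
      by (intro sum_set_integral_disjoint_le set_integrable_abs) (auto dest: finite_subset)
    then show ?thesis
      using assms(6) by (simp add: sum_divide_distrib[symmetric] divide_right_mono)
  qed
  finally show ?thesis
    unfolding T'_def .
qed

lemma sparse_sum_measure_avg1_ratio_gt_le:
  fixes g :: "real^'n \<Rightarrow> real"
  assumes "sparse S" "finite T" "T \<subseteq> S" "\<And>Q'. Q' \<in> T \<Longrightarrow> is_cube Q' \<and> Q' \<subseteq> Q"
    "is_cube Q" "set_integrable lebesgue Q g" "0 < \<theta>"
  shows "(\<Sum>Q'\<in>{Q'\<in>T. \<theta> < avg1 g Q' / avg1 g Q}. measure lebesgue Q')
           \<le> 2 * 3 ^ CARD('n) / \<theta> * measure lebesgue Q"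
proof (cases "avg1 g Q = 0")
  case True
  then show ?thesis
    using assms(5,7) is_cube_measure_pos[of Q] by simp
next
  case False
  then have A: "0 < avg1 g Q"
    using avg1_nonneg[of g Q] by linarith
  have "{Q'\<in>T. \<theta> < avg1 g Q' / avg1 g Q} = {Q'\<in>T. \<theta> * avg1 g Q < avg1 g Q'}"
    using A by (auto simp: field_simps)
  moreover have "(\<integral>x\<in>Q. \<bar>g x\<bar> \<partial>lebesgue) = avg1 g Q * measure lebesgue Q"
    using is_cube_measure_pos[OF assms(5)] by (simp add: set_integral_abs_eq_avg1_mult)
  ultimately show ?thesis
    using sparse_sum_measure_avg1_gt_le[OF assms(1-4,6), of "\<theta> * avg1 g Q"] A assms(7)
    by simp
qed

lemma powr_le_dyadic_layers:
  fixes x s :: real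
  assumes "0 \<le> s" "0 \<le> x" "x \<le> 2 ^ N"
  shows "x powr s \<le> 1 + (\<Sum>i=1..N. if 2 ^ (i - 1) < x then 2 powr (real i * s) else 0)"
  using assms(3)
proof (induction N)
  case 0
  then show ?case
    using assms(1,2) powr_mono2[of s x 1] by simp
next
  case (Suc N)
  have layers_nonneg: "0 \<le> (\<Sum>i=1..N. if 2 ^ (i - 1) < x then 2 powr (real i * s) else (0::real))"
    by (intro sum_nonneg) auto
  show ?case
  proof (cases "x \<le> 2 ^ N")
    case True
    then show ?thesis
      using Suc.IH by simp
  next
    case False
    have "x powr s \<le> (2 ^ Suc N) powr s"
      using Suc.prems assms(1,2) by (intro powr_mono2) auto
    also have "\<dots> = 2 powr (real (Suc N) * s)"
      by (subst powr_realpow[symmetric]) (simp_all add: powr_powr)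
    finally show ?thesis
      using False layers_nonneg by simp
  qed
qed

lemma sum_powr_le_dyadic_layers:
  fixes x w :: "'a \<Rightarrow> real"
  assumes "finite T" "0 \<le> s" "\<And>Q. Q \<in> T \<Longrightarrow> 0 \<le> x Q \<and> x Q \<le> 2 ^ N"
    "\<And>Q. Q \<in> T \<Longrightarrow> 0 \<le> w Q"
  shows "(\<Sum>Q\<in>T. x Q powr s * w Q)
           \<le> (\<Sum>Q\<in>T. w Q) + (\<Sum>i=1..N. 2 powr (real i * s) * (\<Sum>Q\<in>{Q\<in>T. 2 ^ (i - 1) < x Q}. w Q))"
proof -
  have "(\<Sum>Q\<in>T. x Q powr s * w Q)
      \<le> (\<Sum>Q\<in>T. (1 + (\<Sum>i=1..N. if 2 ^ (i - 1) < x Q then 2 powr (real i * s) else 0)) * w Q)"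
    using assms(2-4) powr_le_dyadic_layers by (intro sum_mono mult_right_mono) auto
  also have "\<dots> = (\<Sum>Q\<in>T. w Q)
      + (\<Sum>i=1..N. \<Sum>Q\<in>T. (if 2 ^ (i - 1) < x Q then 2 powr (real i * s) else 0) * w Q)"
    by (simp add: distrib_right sum.distrib sum_distrib_right sum.swap[of _ T])
  also have "\<dots> = (\<Sum>Q\<in>T. w Q) + (\<Sum>i=1..N. 2 powr (real i * s) * (\<Sum>Q\<in>{Q\<in>T. 2 ^ (i - 1) < x Q}. w Q))"
    using assms(1) by (auto simp: sum.inter_filter sum_distrib_left intro!: sum.cong)
  finally show ?thesis .
qed

lemma powr_mult_div_power_eq_power:
  fixes b s :: real
  assumes "0 < b"
  shows "b powr (real i * s) / b ^ i = (b powr (s - 1)) ^ i"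
proof -
  have "(b powr (s - 1)) ^ i = b powr ((s - 1) * real i)"
    using assms by (simp add: powr_powr flip: powr_realpow)
  also have "\<dots> = b powr (real i * s) / b ^ i"
    using assms by (simp add: powr_diff algebra_simps flip: powr_realpow)
  finally show ?thesis ..
qed

lemma sum_power_le_geometric:
  fixes r :: real
  assumes "0 \<le> r" "r < 1"
  shows "(\<Sum>i=1..N. r ^ i) \<le> 1 / (1 - r)"
proof -
  have "(\<Sum>i=1..N. r ^ i) \<le> (\<Sum>i. r ^ i)"
    using assms by (intro sum_le_suminf) auto
  then show ?thesis
    using assms by (simp add: suminf_geometric)
qed

lemma sparse_dyadic_layer_le:
  fixes g :: "real^'n \<Rightarrow> real"
  assumes "sparse S" "finite T" "T \<subseteq> S" "\<And>Q'. Q' \<in> T \<Longrightarrow> is_cube Q' \<and> Q' \<subseteq> Q"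
    "is_cube Q" "set_integrable lebesgue Q g" "1 \<le> i"
  shows "2 powr (real i * s) * (\<Sum>Q'\<in>{Q'\<in>T. 2 ^ (i - 1) < avg1 g Q' / avg1 g Q}. measure lebesgue Q')
           \<le> 4 * 3 ^ CARD('n) * measure lebesgue Q * (2 powr (s - 1)) ^ i"
proof -
  have two_pow: "(2::real) ^ i = 2 * 2 ^ (i - 1)"
    using assms(7) by (simp flip: power_Suc)
  have "2 powr (real i * s) * (\<Sum>Q'\<in>{Q'\<in>T. 2 ^ (i - 1) < avg1 g Q' / avg1 g Q}. measure lebesgue Q')
      \<le> 2 powr (real i * s) * (2 * 3 ^ CARD('n) / 2 ^ (i - 1) * measure lebesgue Q)"
    by (intro mult_left_mono sparse_sum_measure_avg1_ratio_gt_le[OF assms(1-6)]) auto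
  also have "\<dots> = 4 * 3 ^ CARD('n) * measure lebesgue Q * (2 powr (real i * s) / 2 ^ i)"
    by (simp add: two_pow)
  also have "\<dots> = 4 * 3 ^ CARD('n) * measure lebesgue Q * (2 powr (s - 1)) ^ i"
    by (simp add: powr_mult_div_power_eq_power)
  finally show ?thesis .
qed

lemma sparse_sum_avg1_ratio_powr_le:
  fixes g :: "real^'n \<Rightarrow> real"
  assumes "sparse S" "finite T" "T \<subseteq> S" "\<And>Q'. Q' \<in> T \<Longrightarrow> is_cube Q' \<and> Q' \<subseteq> Q"
    "is_cube Q" "set_integrable lebesgue Q g" "0 \<le> s" "s < 1"
  shows "(\<Sum>Q'\<in>T. (avg1 g Q' / avg1 g Q) powr s * measure lebesgue Q')
           \<le> (2 + 4 * 3 ^ CARD('n) / (1 - 2 powr (s - 1))) * measure lebesgue Q"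
proof -
  define x where "x Q' = avg1 g Q' / avg1 g Q" for Q'
  define D :: real where "D = 3 ^ CARD('n)"
  define r where "r = 2 powr (s - 1)"
  have "r < 2 powr 0"
    unfolding r_def using assms(8) by (intro powr_less_mono) auto
  then have r: "0 \<le> r" "r < 1"
    unfolding r_def by auto
  have x_nonneg: "0 \<le> x Q'" for Q'
    unfolding x_def by (simp add: avg1_nonneg)
  obtain N where "(\<Sum>Q'\<in>T. x Q') < 2 ^ N"
    using real_arch_pow[of 2] by auto
  then have x_le: "x Q' \<le> 2 ^ N" if "Q' \<in> T" for Q'
    using member_le_sum[of Q' T x] assms(2) x_nonneg that by force
  have "(\<Sum>Q'\<in>T. x Q' powr s * measure lebesgue Q')
      \<le> (\<Sum>Q'\<in>T. measure lebesgue Q')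
        + (\<Sum>i=1..N. 2 powr (real i * s) * (\<Sum>Q'\<in>{Q'\<in>T. 2 ^ (i - 1) < x Q'}. measure lebesgue Q'))"
    using assms(2,7) x_nonneg x_le by (intro sum_powr_le_dyadic_layers) auto
  also have "\<dots> \<le> 2 * measure lebesgue Q + (\<Sum>i=1..N. 4 * D * measure lebesgue Q * r ^ i)"
    unfolding x_def D_def r_def using assms(4) is_cube_fmeasurable[OF assms(5)]
    by (intro add_mono sum_mono sparse_sum_measure_le[OF assms(1-3)] sparse_dyadic_layer_le[OF assms(1-6)])
       auto
  also have "\<dots> = 2 * measure lebesgue Q + 4 * D * measure lebesgue Q * (\<Sum>i=1..N. r ^ i)"
    by (simp add: sum_distrib_left)
  also have "\<dots> \<le> 2 * measure lebesgue Q + 4 * D * measure lebesgue Q * (1 / (1 - r))"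
    using r is_cube_measure_pos[OF assms(5)]
    by (intro add_left_mono mult_left_mono sum_power_le_geometric) (auto simp: D_def)
  finally show ?thesis
    unfolding x_def D_def r_def by (simp add: algebra_simps)
qed

lemma pw_nonneg: "0 \<le> x \<Longrightarrow> 0 \<le> pw x a"
  by (simp add: pw_def)

lemma pw_mult: "pw (x * y) a = pw x a * pw y a"
  by (simp add: pw_def powr_mult)

text \<open>The case \<open>Max (y ` I) = 0\<close> is separate because \<open>0 powr 0 = 0\<close>, while \<open>pw 0 0 = 1\<close>.\<close>

lemma prod_pw_le_one_plus_sum_powr:
  fixes y a :: "'i \<Rightarrow> real"
  assumes "finite I" "\<And>j. j \<in> I \<Longrightarrow> 0 \<le> y j" "\<And>j. j \<in> I \<Longrightarrow> 0 \<le> a j"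
  shows "(\<Prod>j\<in>I. pw (y j) (a j)) \<le> 1 + (\<Sum>j\<in>I. y j powr (\<Sum>j\<in>I. a j))"
proof (cases "I = {}")
  case True
  then show ?thesis by simp
next
  case False
  define M where "M = Max (y ` I)"
  obtain j0 where j0: "j0 \<in> I" "M = y j0"
    using obtains_MAX[OF assms(1) False] unfolding M_def by metis
  have y_le: "y j \<le> M" if "j \<in> I" for j
    using assms(1) that unfolding M_def by simp
  have powr_sum_nonneg: "0 \<le> (\<Sum>j\<in>I. y j powr (\<Sum>j\<in>I. a j))"
    by (simp add: sum_nonneg)
  show ?thesis
  proof (cases "M = 0")
    case True
    then have "(\<Prod>j\<in>I. pw (y j) (a j)) \<le> 1"
      using assms(2) y_le by (intro prod_le_1) (force simp: pw_def)
    then show ?thesis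
      using powr_sum_nonneg by linarith
  next
    case False
    then have "0 < M"
      using assms(2) j0 by force
    have "(\<Prod>j\<in>I. pw (y j) (a j)) \<le> (\<Prod>j\<in>I. M powr a j)"
      using assms(2,3) y_le \<open>0 < M\<close> by (intro prod_mono) (simp add: pw_def powr_mono2)
    also have "\<dots> = y j0 powr (\<Sum>j\<in>I. a j)"
      using \<open>0 < M\<close> j0(2) by (simp add: powr_sum)
    also have "\<dots> \<le> (\<Sum>j\<in>I. y j powr (\<Sum>j\<in>I. a j))"
      using assms(1) j0(1) by (intro member_le_sum) auto
    finally show ?thesis
      by simp
  qed
qed

lemma prod_pw_avg1_le_sum_ratio_powr:
  fixes g :: "nat \<Rightarrow> real^'n \<Rightarrow> real"
  assumes "\<And>j. j < m \<Longrightarrow> 0 \<le> a j" "\<And>j. j < m \<Longrightarrow> set_integrable lebesgue Q (g j)"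
    "Q' \<in> sets lebesgue" "Q' \<subseteq> Q" "0 < measure lebesgue Q"
  shows "(\<Prod>j<m. pw (avg1 (g j) Q') (a j))
           \<le> (\<Prod>j<m. pw (avg1 (g j) Q) (a j))
              * (1 + (\<Sum>j<m. (avg1 (g j) Q' / avg1 (g j) Q) powr (\<Sum>j<m. a j)))"
proof -
  have "(\<Prod>j<m. pw (avg1 (g j) Q') (a j))
      = (\<Prod>j<m. pw (avg1 (g j) Q * (avg1 (g j) Q' / avg1 (g j) Q)) (a j))"
    using assms(2-5) by (intro prod.cong refl arg_cong2[where f = pw] avg1_eq_mult_ratio_if_subset) auto
  also have "\<dots> = (\<Prod>j<m. pw (avg1 (g j) Q) (a j)) * (\<Prod>j<m. pw (avg1 (g j) Q' / avg1 (g j) Q) (a j))"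
    by (simp only: pw_mult prod.distrib)
  also have "\<dots> \<le> (\<Prod>j<m. pw (avg1 (g j) Q) (a j))
      * (1 + (\<Sum>j<m. (avg1 (g j) Q' / avg1 (g j) Q) powr (\<Sum>j<m. a j)))"
    using assms(1)
    by (intro mult_left_mono prod_pw_le_one_plus_sum_powr divide_nonneg_nonneg avg1_nonneg
        prod_nonneg pw_nonneg) auto
  finally show ?thesis .
qed

lemma sparse_sum_prod_avg1_le:
  fixes g :: "nat \<Rightarrow> real^'n \<Rightarrow> real"
  assumes "\<And>j. j < m \<Longrightarrow> 0 \<le> a j" "(\<Sum>j<m. a j) < 1"
    "sparse S" "finite T" "T \<subseteq> S" "\<And>Q'. Q' \<in> T \<Longrightarrow> is_cube Q' \<and> Q' \<subseteq> Q" "is_cube Q"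
    "\<And>j. j < m \<Longrightarrow> set_integrable lebesgue Q (g j)"
  shows "(\<Sum>Q'\<in>T. (\<Prod>j<m. pw (avg1 (g j) Q') (a j)) * measure lebesgue Q')
           \<le> (2 + m * (2 + 4 * 3 ^ CARD('n) / (1 - 2 powr ((\<Sum>j<m. a j) - 1))))
              * ((\<Prod>j<m. pw (avg1 (g j) Q) (a j)) * measure lebesgue Q)"
proof -
  define s where "s = (\<Sum>j<m. a j)"
  define K where "K = 2 + 4 * 3 ^ CARD('n) / (1 - 2 powr (s - 1))"
  define F where "F Q' = (\<Prod>j<m. pw (avg1 (g j) Q') (a j))" for Q'
  define x where "x j Q' = avg1 (g j) Q' / avg1 (g j) Q" for j Q'
  have F_nonneg: "0 \<le> F Q'" for Q'
    unfolding F_def by (intro prod_nonneg pw_nonneg avg1_nonneg)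
  have "0 \<le> s"
    unfolding s_def using assms(1) by (intro sum_nonneg) auto
  have "(\<Sum>Q'\<in>T. F Q' * measure lebesgue Q')
      \<le> (\<Sum>Q'\<in>T. F Q * (1 + (\<Sum>j<m. x j Q' powr s)) * measure lebesgue Q')"
    unfolding F_def x_def s_def using assms(6) is_cube_fmeasurable is_cube_measure_pos[OF assms(7)]
    by (intro sum_mono mult_right_mono prod_pw_avg1_le_sum_ratio_powr assms(1,8)) auto
  also have "\<dots> = F Q * ((\<Sum>Q'\<in>T. measure lebesgue Q')
      + (\<Sum>j<m. \<Sum>Q'\<in>T. x j Q' powr s * measure lebesgue Q'))"
    by (simp add: distrib_left distrib_right sum.distrib sum_distrib_left sum_distrib_right
        sum.swap[of _ T] mult.assoc)
  also have "\<dots> \<le> F Q * (2 * measure lebesgue Q + (\<Sum>j<m. K * measure lebesgue Q))"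
    unfolding x_def K_def using assms(2,6,8) is_cube_fmeasurable[OF assms(7)] \<open>0 \<le> s\<close> s_def
    by (intro mult_left_mono add_mono sum_mono F_nonneg sparse_sum_measure_le[OF assms(3-5)]
        sparse_sum_avg1_ratio_powr_le[OF assms(3-5) _ assms(7)]) auto
  also have "\<dots> = (2 + m * K) * (F Q * measure lebesgue Q)"
    by (simp add: algebra_simps)
  finally show ?thesis
    unfolding F_def K_def s_def .
qed

lemma nonneg_summable_on_infsum_le:
  fixes f :: "'a \<Rightarrow> real"
  assumes "\<And>x. x \<in> A \<Longrightarrow> 0 \<le> f x" "\<And>F. finite F \<Longrightarrow> F \<subseteq> A \<Longrightarrow> sum f F \<le> B"
  shows "f summable_on A \<and> infsum f A \<le> B"
proof
  show "f summable_on A"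
    using assms by (intro nonneg_bdd_above_summable_on bdd_aboveI[of _ B]) auto
  then show "infsum f A \<le> B"
    using assms(2) by (rule infsum_le_finite_sums)
qed

lemma sparse_prod_avg1_summable_on_infsum_le:
  fixes g :: "nat \<Rightarrow> real^'n \<Rightarrow> real"
  assumes "\<And>j. j < m \<Longrightarrow> 0 \<le> a j" "(\<Sum>j<m. a j) < 1" "sparse S" "\<And>Q'. Q' \<in> S \<Longrightarrow> is_cube Q'"
    "is_cube Q" "\<And>j. j < m \<Longrightarrow> set_integrable lebesgue Q (g j)"
  shows "(\<lambda>Q'. (\<Prod>j<m. pw (avg1 (g j) Q') (a j)) * measure lebesgue Q') summable_on {Q'\<in>S. Q' \<subseteq> Q}
         \<and> (\<Sum>\<^sub>\<infinity>Q'\<in>{Q'\<in>S. Q' \<subseteq> Q}. (\<Prod>j<m. pw (avg1 (g j) Q') (a j)) * measure lebesgue Q')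
             \<le> (2 + m * (2 + 4 * 3 ^ CARD('n) / (1 - 2 powr ((\<Sum>j<m. a j) - 1))))
                * ((\<Prod>j<m. pw (avg1 (g j) Q) (a j)) * measure lebesgue Q)"
proof (rule nonneg_summable_on_infsum_le)
  show "0 \<le> (\<Prod>j<m. pw (avg1 (g j) Q') (a j)) * measure lebesgue Q'" for Q'
    by (intro mult_nonneg_nonneg prod_nonneg pw_nonneg avg1_nonneg) auto
  fix F assume "finite F" "F \<subseteq> {Q'\<in>S. Q' \<subseteq> Q}"
  then show "(\<Sum>Q'\<in>F. (\<Prod>j<m. pw (avg1 (g j) Q') (a j)) * measure lebesgue Q')
      \<le> (2 + m * (2 + 4 * 3 ^ CARD('n) / (1 - 2 powr ((\<Sum>j<m. a j) - 1))))
         * ((\<Prod>j<m. pw (avg1 (g j) Q) (a j)) * measure lebesgue Q)"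
    using assms(4) by (intro sparse_sum_prod_avg1_le[OF assms(1-3) _ _ _ assms(5,6)]) auto
qed

theorem lemma3p2:
  fixes m :: nat and a :: "nat \<Rightarrow> real"
  assumes "\<forall>j<m. 0 \<le> a j \<and> a j < 1"
    and "(\<Sum>j<m. a j) < 1"
  shows "\<exists>C>0. \<forall>(t :: real^'n) S (g :: nat \<Rightarrow> (real^'n \<Rightarrow> real)) Q.
           grid_shift t \<longrightarrow> S \<subseteq> dyadic_grid t \<longrightarrow> sparse S \<longrightarrow>
           (\<forall>j<m. locally_integrable (g j)) \<longrightarrow> Q \<in> dyadic_grid t \<longrightarrow>
           ((\<lambda>Q'. (\<Prod>j<m. pw (avg1 (g j) Q') (a j)) * measure lebesgue Q')
               summable_on {Q'\<in>S. Q' \<subseteq> Q})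
           \<and> (\<Sum>\<^sub>\<infinity>Q'\<in>{Q'\<in>S. Q' \<subseteq> Q}. (\<Prod>j<m. pw (avg1 (g j) Q') (a j)) * measure lebesgue Q')
               \<le> C * ((\<Prod>j<m. pw (avg1 (g j) Q) (a j)) * measure lebesgue Q)"
proof -
  define C where "C = 2 + m * (2 + 4 * 3 ^ CARD('n) / (1 - 2 powr ((\<Sum>j<m. a j) - 1)))"
  have "2 powr ((\<Sum>j<m. a j) - 1) < 2 powr 0"
    using assms(2) by (intro powr_less_mono) auto
  then have C_pos: "0 < C"
    unfolding C_def by (simp add: add_pos_nonneg)
  have a_nonneg: "\<And>j. j < m \<Longrightarrow> 0 \<le> a j"
    using assms(1) by simp
  show ?thesis
    by (rule exI[of _ C], rule conjI[OF C_pos], intro allI impI, unfold C_def,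
        rule sparse_prod_avg1_summable_on_infsum_le)
       (use a_nonneg assms(2) in
        \<open>auto intro: set_integrable_cube_if_locally_integrable dyadic_cube_is_cube\<close>)
qed

end
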